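(* Consider Setting B and suppose the sequence of communication graphs $\{\mathcal G[k]\}_{k\ge0}$ is jointly strongly $(3f+1)$-robust w.r.t. the source set $\mathcal S$. Then for any desired rate $\rho\in(0,1)$, the regular source nodes can choose observer gains $l_i$ such that, when the regular nodes run Algorithm 2, for every $f$-total Byzantine adversarial set $\mathcal A$ and every adversarial behavior, and for every initial state and initial estimates, there exist constants $c\ge0$ and $K\in\mathbb N$ with $|\hat x_i[k]-x[k]|\le c\rho^k$ for all $k\ge K$ and all $i\in\mathcal R$.
   Context: Setting B. Scalar system $x[k+1]=ax[k]$, $a\in\mathbb R$, monitored by nodes $\mathcal V=\{1,\dots,N\}$ with measurements $y_i[k]=c_ix[k]$, $c_i\in\mathbb R$. Source set $\mathcal S=\{i\in\mathcal V:c_i\neq0\}$. Time-varying directed graphs $\mathcal G[k]=(\mathcal V,\mathcal E[k])$, $\mathcal N_i[k]=\{l\ne i:(l,i)\in\mathcal E[k]\}$; the union graph over an interval has the union of the edge sets. An unknown set $\mathcal A\subseteq\mathcal V$ of adversarial nodes with $|\mathcal A|\le f$ ($f$-total model; $\mathcal A$ may intersect $\mathcal S$); $\mathcal R=\mathcal V\setminus\mathcal A$ are regular. Adversaries are Byzantine: at each time they may send arbitrary, possibly different values (of both estimate and freshness index) to different out-neighbors, or send nothing, and may collude. At each time $k$, each node $l$ sends to its out-neighbors a pair (estimate, freshness index); regular $l$ sends its true $(\hat x_l[k],\tau_l[k])$. Algorithm 2 (executed by regular nodes). Regular source $i\in\mathcal S$: $\tau_i[k]=0$ for all $k$ and $\hat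 x_i[k+1]=a\hat x_i[k]+l_i(y_i[k]-c_i\hat x_i[k])$ with observer gain $l_i$. Regular non-source $i$: keeps $\hat x_i[k]$ (arbitrary initial), $\tau_i[k]\in\mathbb N\cup\{\omega\}$ with $\tau_i[0]=\omega$, and a list $\mathcal M_i$ of distinct node labels (initially empty, at most $2f+1$ entries, stored in $2f+1$ slots) with, for each $l\in\mathcal M_i$, a stored estimate $v_{i,l}$, stored index $d_{i,l}\in\mathbb N$ and time stamp $\phi_{i,l}$. At time $k$ let $\mathcal J_i[k]$ be the set of $l\in\mathcal N_i[k]$ whose reported index $\tau_l[k]$ lies in $\mathbb N$ and satisfies $\tau_l[k]\le k$. "Appending $l$ at time $k$" means: put $l$ in $\mathcal M_i$ (if absent), set $v_{i,l}=\hat x_l[k]$, $d_{i,l}=\tau_l[k]$ (reported values), $\phi_{i,l}=k$. Filtering update (F) at time $k$ (requires $|\mathcal M_i|=2f+1$): set $\tau_i[k+1]=\max_{l\in\mathcal M_i}d_{i,l}+1$; form $\bar x_{i,l}[k]=a^{k-\phi_{i,l}}v_{i,l}$ for $l\in\mathcal M_i$; discard the $f$ largest and $f$ smallest of these $2f+1$ values, call the remaining one $\bar x_i[k]$, and set $\hat x_i[k+1]=a\bar x_i[k]$. Case $\tau_i[k]=\omega$: let $\mathcal J'=\mathcal J_i[k]\setminus\mathcal M_i$. If $|\mathcal M_i|+|\mathcal J'|<2f+1$, append every $l\in\mathcal J'$, set $\tau_i[k+1]=\omega$ and $\hat x_i[k+1]=a\hat x_i[k]$. Otherwise append the $2f+1-|\mathcal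 M_i|$ nodes of $\mathcal J'$ with smallest reported indices (ties broken arbitrarily) and perform (F). Case $\tau_i[k]\ne\omega$: for each $l\in\mathcal J_i[k]\cap\mathcal M_i$ with reported $\tau_l[k]<d_{i,l}$, append $l$ (refreshing its entries); then rank the nodes of $\mathcal M_i\cup(\mathcal J_i[k]\setminus\mathcal M_i)$ by index ($d_{i,l}$ for $l\in\mathcal M_i$, reported $\tau_l[k]$ otherwise), keep the $2f+1$ with smallest index (ties arbitrary), appending newcomers and deleting dropped nodes (a retained node keeps its storage slot; a newcomer occupies the slot of a dropped node), and perform (F). In all cases, after the step every stored $d_{i,l}$ is incremented by $1$, and $\mathcal M_i$, $v$, $\phi$ carry over to time $k+1$. Definitions. For a graph $\mathcal G=(\mathcal V,\mathcal E)$ with in-neighbor sets $\mathcal N_i$ and $r\in\mathbb N_+$, a set $\mathcal C\subseteq\mathcal V$ is $r$-reachable if some $i\in\mathcal C$ has $|\mathcal N_i\setminus\mathcal C|\ge r$. $\mathcal G$ is strongly $r$-robust w.r.t. $\mathcal S\subset\mathcal V$ if every nonempty $\mathcal C\subseteq\mathcal V\setminus\mathcal S$ is $r$-reachable. A sequence $\{\mathcal G[k]\}$ is jointly strongly $r$-robust w.r.t. $\mathcal S$ if there is $T\in\mathbb N_+$ such that the union graph over $[kT,(k+1)T-1]$ is strongly $r$-robust w.r.t. $\mathcal S$ for every $k\in\mathbb N$. *)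

theory Defs
  imports Complex_Main
begin

text \<open>An edge (l,i) means l sends to i. Node labels are naturals; the node set is V.\<close>

definition in_nbrs :: "(nat \<times> nat) set \<Rightarrow> nat \<Rightarrow> nat set" where
  "in_nbrs E i = {l. l \<noteq> i \<and> (l, i) \<in> E}"

definition r_reachable :: "(nat \<times> nat) set \<Rightarrow> nat set \<Rightarrow> nat \<Rightarrow> bool" where
  "r_reachable E C r \<longleftrightarrow> (\<exists>i\<in>C. card (in_nbrs E i - C) \<ge> r)"

definition strongly_robust :: "nat set \<Rightarrow> (nat \<times> nat) set \<Rightarrow> nat set \<Rightarrow> nat \<Rightarrow> bool" where
  "strongly_robust V E S r \<longleftrightarrow>
     (\<forall>C. C \<subseteq> V - S \<and> C \<noteq> {} \<longrightarrow> r_reachable E C r)"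

definition jointly_strongly_robust ::
  "nat set \<Rightarrow> (nat \<Rightarrow> (nat \<times> nat) set) \<Rightarrow> nat set \<Rightarrow> nat \<Rightarrow> bool" where
  "jointly_strongly_robust V E S r \<longleftrightarrow>
     (\<exists>T::nat. T > 0 \<and>
        (\<forall>k. strongly_robust V (\<Union>t\<in>{k*T..<(k+1)*T}. E t) S r))"

definition source_set :: "nat set \<Rightarrow> (nat \<Rightarrow> real) \<Rightarrow> nat set" where
  "source_set V c = {i \<in> V. c i \<noteq> 0}"

text \<open>A message is None (nothing sent) or Some (estimate, index); an index is
  None (= omega) or Some t with t a natural number.\<close>

type_synonym msg = "(real \<times> nat option) option"

definition J_set :: "nat set \<Rightarrow> nat \<Rightarrow> (nat \<Rightarrow> msg) \<Rightarrow> nat set" where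
  "J_set Nb k m = {l \<in> Nb. \<exists>x t. m l = Some (x, Some t) \<and> t \<le> k}"

definition rx :: "msg \<Rightarrow> real" where "rx ms = fst (the ms)"
definition rt :: "msg \<Rightarrow> nat" where "rt ms = the (snd (the ms))"

text \<open>Discarding the f largest and f smallest of 2f+1 values leaves the (f+1)-th
  smallest one, i.e. index f of the sorted list.\<close>

definition filt_tau :: "nat set \<Rightarrow> (nat \<Rightarrow> nat) \<Rightarrow> nat option" where
  "filt_tau M d = Some (Max (d ` M) + 1)"

definition filt_x :: "nat \<Rightarrow> real \<Rightarrow> nat \<Rightarrow> nat set \<Rightarrow> (nat \<Rightarrow> real) \<Rightarrow> (nat \<Rightarrow> nat) \<Rightarrow> real" where
  "filt_x f a k M v ph =
     a * (sort (map (\<lambda>l. a ^ (k - ph l) * v l) (sorted_list_of_set M)) ! f)"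

text \<open>Arguments: f, a, time k, in-neighbour set, received messages m (m l = what l
  reported at time k), current state (xhat, tau, M, v, d, phi) and next state.
  Stored data are only meaningful for labels in M. The primed quantities are the
  stored data after appending/refreshing and before the increment of d.\<close>

definition nonsource_step ::
  "nat \<Rightarrow> real \<Rightarrow> nat \<Rightarrow> nat set \<Rightarrow> (nat \<Rightarrow> msg) \<Rightarrow>
   real \<Rightarrow> nat option \<Rightarrow> nat set \<Rightarrow> (nat \<Rightarrow> real) \<Rightarrow> (nat \<Rightarrow> nat) \<Rightarrow> (nat \<Rightarrow> nat) \<Rightarrow>
   real \<Rightarrow> nat option \<Rightarrow> nat set \<Rightarrow> (nat \<Rightarrow> real) \<Rightarrow> (nat \<Rightarrow> nat) \<Rightarrow> (nat \<Rightarrow> nat) \<Rightarrow> bool"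
where
  "nonsource_step f a k Nb m x \<tau> M v d ph x1 \<tau>1 M1 v1 d1 ph1 \<longleftrightarrow>
   (let J = J_set Nb k m in
    \<exists>M' v' d' ph'.
      M1 = M' \<and> (\<forall>l\<in>M'. v1 l = v' l \<and> d1 l = d' l + 1 \<and> ph1 l = ph' l) \<and>
      (case \<tau> of
         None \<Rightarrow>
           (let J' = J - M in
            if card M + card J' < 2*f+1 then
              M' = M \<union> J' \<and>
              (\<forall>l\<in>M. v' l = v l \<and> d' l = d l \<and> ph' l = ph l) \<and>
              (\<forall>l\<in>J'. v' l = rx (m l) \<and> d' l = rt (m l) \<and> ph' l = k) \<and>
              \<tau>1 = None \<and> x1 = a * x
            else
              (\<exists>B. B \<subseteq> J' \<and> card B = 2*f+1 - card M \<and>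
                 (\<forall>l\<in>B. \<forall>l'\<in>J' - B. rt (m l) \<le> rt (m l')) \<and>
                 M' = M \<union> B \<and>
                 (\<forall>l\<in>M. v' l = v l \<and> d' l = d l \<and> ph' l = ph l) \<and>
                 (\<forall>l\<in>B. v' l = rx (m l) \<and> d' l = rt (m l) \<and> ph' l = k) \<and>
                 \<tau>1 = filt_tau M' d' \<and> x1 = filt_x f a k M' v' ph'))
       | Some _ \<Rightarrow>
           (let R = {l \<in> J \<inter> M. rt (m l) < d l};
                vr = (\<lambda>l. if l \<in> R then rx (m l) else v l);
                dr = (\<lambda>l. if l \<in> R then rt (m l) else d l);
                phr = (\<lambda>l. if l \<in> R then k else ph l);
                idx = (\<lambda>l. if l \<in> M then dr l else rt (m l))
            in M' \<subseteq> M \<union> J \<and> card M' = 2*f+1 \<and>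
               (\<forall>l\<in>M'. \<forall>l'\<in>(M \<union> J) - M'. idx l \<le> idx l') \<and>
               (\<forall>l\<in>M' \<inter> M. v' l = vr l \<and> d' l = dr l \<and> ph' l = phr l) \<and>
               (\<forall>l\<in>M' - M. v' l = rx (m l) \<and> d' l = rt (m l) \<and> ph' l = k) \<and>
               \<tau>1 = filt_tau M' d' \<and> x1 = filt_x f a k M' v' ph')))"

text \<open>x: plant state over time; xh i k, tau i k, M i k, v i k l, d i k l, ph i k l:
  state of node i at time k. adv k l i: what adversarial node l sends to i at time k.\<close>

definition reported ::
  "nat set \<Rightarrow> (nat \<Rightarrow> nat \<Rightarrow> nat \<Rightarrow> msg) \<Rightarrow> (nat \<Rightarrow> nat \<Rightarrow> real) \<Rightarrow> (nat \<Rightarrow> nat \<Rightarrow> nat option)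
   \<Rightarrow> nat \<Rightarrow> nat \<Rightarrow> nat \<Rightarrow> msg" where
  "reported A adv xh tau k l i = (if l \<in> A then adv k l i else Some (xh l k, tau l k))"

definition alg2_exec ::
  "nat set \<Rightarrow> (nat \<Rightarrow> (nat \<times> nat) set) \<Rightarrow> nat \<Rightarrow> real \<Rightarrow> (nat \<Rightarrow> real) \<Rightarrow> (nat \<Rightarrow> real) \<Rightarrow>
   nat set \<Rightarrow> (nat \<Rightarrow> nat \<Rightarrow> nat \<Rightarrow> msg) \<Rightarrow> (nat \<Rightarrow> real) \<Rightarrow>
   (nat \<Rightarrow> nat \<Rightarrow> real) \<Rightarrow> (nat \<Rightarrow> nat \<Rightarrow> nat option) \<Rightarrow> (nat \<Rightarrow> nat \<Rightarrow> nat set) \<Rightarrow>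
   (nat \<Rightarrow> nat \<Rightarrow> nat \<Rightarrow> real) \<Rightarrow> (nat \<Rightarrow> nat \<Rightarrow> nat \<Rightarrow> nat) \<Rightarrow> (nat \<Rightarrow> nat \<Rightarrow> nat \<Rightarrow> nat) \<Rightarrow> bool"
where
  "alg2_exec V E f a c L A adv x xh tau M v d ph \<longleftrightarrow>
    (\<forall>k. x (Suc k) = a * x k) \<and>
    (\<forall>i\<in>V - A. c i \<noteq> 0 \<longrightarrow>
       (\<forall>k. tau i k = Some 0 \<and>
            xh i (Suc k) = a * xh i k + L i * (c i * x k - c i * xh i k))) \<and>
    (\<forall>i\<in>V - A. c i = 0 \<longrightarrow>
       tau i 0 = None \<and> M i 0 = {} \<and>
       (\<forall>k. nonsource_step f a k (in_nbrs (E k) i) (\<lambda>l. reported A adv xh tau k l i)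
              (xh i k) (tau i k) (M i k) (v i k) (d i k) (ph i k)
              (xh i (Suc k)) (tau i (Suc k)) (M i (Suc k)) (v i (Suc k)) (d i (Suc k)) (ph i (Suc k))))"

end

theory Submission
  imports Defs
begin

text \<open>
  Each regular source runs an observer whose gain makes its error contract by exactly
  \<rho> per step. A regular non-source node estimates x by the median of 2f+1 stored
  estimates, each propagated forward with a; as at most f of them come from adversaries,
  the median lies between two regular values. Inductively, an estimate with freshness
  index t has error at most G(t) \<rho>^k, where G does not depend on k. Strong
  (3f+1)-robustness leaves every nonempty set of non-source regular nodes with a member
  having 2f+1 regular in-neighbours outside the set in each window of length T, so after
  |V| windows every regular node carries an index, and after |V| more windows the indices
  are uniformly bounded, which gives the rate \<rho>.
\<close>

section \<open>Spreading through jointly robust graphs\<close>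

lemma in_nbrs_UN: "in_nbrs (\<Union>t\<in>I. E t) i = (\<Union>t\<in>I. in_nbrs (E t) i)"
  unfolding in_nbrs_def by auto

lemma strongly_robust_regular_in_nbrs:
  assumes "strongly_robust V U S (3*f+1)" "C \<subseteq> V - S" "C \<noteq> {}"
    and "finite A" "card A \<le> f"
  shows "\<exists>i\<in>C. 2*f+1 \<le> card (in_nbrs U i - C - A)"
proof -
  obtain i where i: "i \<in> C" and "3*f+1 \<le> card (in_nbrs U i - C)"
    using assms(1-3) unfolding strongly_robust_def r_reachable_def by blast
  moreover have "card (in_nbrs U i - C) - card A \<le> card (in_nbrs U i - C - A)"
    using diff_card_le_card_Diff[OF \<open>finite A\<close>] .
  ultimately show ?thesis using \<open>card A \<le> f\<close> by (intro bexI[OF _ i]) linarith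
qed

text \<open>The regular nodes lacking P form a set of non-sources; robustness gives one of them
  2f+1 regular in-neighbours outside the set, so every window shrinks the set.\<close>

lemma robust_spreading:
  fixes P :: "nat \<Rightarrow> nat \<Rightarrow> bool"
  assumes "finite V" "finite A" "card A \<le> f"
    and robust: "\<And>m. strongly_robust V (G m) S (3*f+1)"
    and G_sub: "\<And>m. G m \<subseteq> V \<times> V"
    and source: "\<And>i m. i \<in> V - A \<Longrightarrow> i \<in> S \<Longrightarrow> P i m"
    and persist: "\<And>i m. i \<in> V - A \<Longrightarrow> P i m \<Longrightarrow> P i (Suc m)"
    and spread: "\<And>i m N. i \<in> V - A - S \<Longrightarrow> N \<subseteq> in_nbrs (G m) i - A \<Longrightarrow> 2*f+1 \<le> card N
        \<Longrightarrow> (\<forall>l\<in>N. P l m) \<Longrightarrow> P i (Suc m)"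
  shows "\<forall>i\<in>V - A. P i (card V)"
proof -
  define Bad where "Bad m = {i\<in>V - A. \<not> P i m}" for m
  have fin: "finite (Bad m)" for m
    unfolding Bad_def using \<open>finite V\<close> by auto
  have sub: "Bad (Suc m) \<subseteq> Bad m" for m
    unfolding Bad_def using persist by blast
  have shrink: "Bad (Suc m) \<subset> Bad m" if ne: "Bad m \<noteq> {}" for m
  proof -
    have nonsources: "Bad m \<subseteq> V - S"
      unfolding Bad_def using source by blast
    obtain i where i: "i \<in> Bad m" and N: "2*f+1 \<le> card (in_nbrs (G m) i - Bad m - A)"
      using strongly_robust_regular_in_nbrs[OF robust nonsources ne assms(2,3)] by blast
    have "\<forall>l\<in>in_nbrs (G m) i - Bad m - A. P l m"
      using G_sub unfolding Bad_def in_nbrs_def by blast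
    then have "P i (Suc m)"
      using spread[OF _ _ N] i nonsources unfolding Bad_def by blast
    then show ?thesis using sub i unfolding Bad_def by blast
  qed
  have "card (Bad m) \<le> card V - m" for m
  proof (induction m)
    case 0
    show ?case using card_mono[OF \<open>finite V\<close>] unfolding Bad_def by auto
  next
    case (Suc m)
    show ?case
    proof (cases "Bad m = {}")
      case True
      then show ?thesis using sub[of m] by simp
    next
      case False
      then show ?thesis using psubset_card_mono[OF fin shrink] Suc.IH by fastforce
    qed
  qed
  then have "Bad (card V) = {}"
    using fin by (metis card_0_eq diff_self_eq_0 le_zero_eq)
  then show ?thesis unfolding Bad_def by blast
qed

section \<open>Medians with few outliers\<close>

lemma length_filter_sort_map_sorted_list_of_set:
  assumes "finite S"
  shows "length (filter P (sort (map w (sorted_list_of_set S)))) = card {l\<in>S. P (w l)}"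
proof -
  have "length (filter P (sort (map w (sorted_list_of_set S)))) =
        length (filter (P \<circ> w) (sorted_list_of_set S))"
    by (simp add: filter_sort filter_map)
  also have "\<dots> = card (set (filter (P \<circ> w) (sorted_list_of_set S)))"
    by (metis distinct_card distinct_filter distinct_sorted_list_of_set)
  also have "set (filter (P \<circ> w) (sorted_list_of_set S)) = {l\<in>S. P (w l)}"
    using assms by auto
  finally show ?thesis .
qed

lemma sorted_length_filter_upward_closed:
  assumes "sorted xs" "j < length xs" "P (xs!j)" "\<And>y z. P y \<Longrightarrow> y \<le> z \<Longrightarrow> P z"
  shows "length xs - j \<le> length (filter P xs)"
proof -
  have "{j..<length xs} \<subseteq> {i. i < length xs \<and> P (xs!i)}"
  proof
    fix i assume "i \<in> {j..<length xs}"
    then have "i < length xs" "xs!j \<le> xs!i" using sorted_nth_mono[OF assms(1)] by auto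
    then show "i \<in> {i. i < length xs \<and> P (xs!i)}" using assms(3,4) by blast
  qed
  then have "card {j..<length xs} \<le> card {i. i < length xs \<and> P (xs!i)}"
    by (intro card_mono) auto
  then show ?thesis by (simp add: length_filter_conv_card)
qed

lemma sorted_length_filter_downward_closed:
  assumes "sorted xs" "j < length xs" "P (xs!j)" "\<And>y z. P y \<Longrightarrow> z \<le> y \<Longrightarrow> P z"
  shows "Suc j \<le> length (filter P xs)"
proof -
  have "{0..j} \<subseteq> {i. i < length xs \<and> P (xs!i)}"
  proof
    fix i assume "i \<in> {0..j}"
    then have "i < length xs" "xs!i \<le> xs!j" using sorted_nth_mono[OF assms(1)] assms(2) by auto
    then show "i \<in> {i. i < length xs \<and> P (xs!i)}" using assms(3,4) by blast
  qed
  then have "card {0..j} \<le> card {i. i < length xs \<and> P (xs!i)}"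
    by (intro card_mono) auto
  then show ?thesis by (simp add: length_filter_conv_card)
qed

text \<open>Each side of the median of 2f+1 values holds f+1 of them, hence a good one.\<close>

lemma sorted_median_close:
  fixes w :: "'a::linorder \<Rightarrow> real"
  assumes fin: "finite S" and card_S: "card S = 2*f+1" and card_bad: "card (S \<inter> A) \<le> f"
    and good: "\<And>l. l \<in> S \<Longrightarrow> l \<notin> A \<Longrightarrow> \<bar>w l - X\<bar> \<le> B"
  shows "\<bar>sort (map w (sorted_list_of_set S)) ! f - X\<bar> \<le> B"
proof -
  define xs where "xs = sort (map w (sorted_list_of_set S))"
  have len: "length xs = 2*f+1" and sorted: "sorted xs"
    using card_S fin by (simp_all add: xs_def)
  have few: "card {l\<in>S. Q (w l)} \<le> f" if "\<And>y. Q y \<Longrightarrow> B < \<bar>y - X\<bar>" for Q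
  proof -
    have "{l\<in>S. Q (w l)} \<subseteq> S \<inter> A"
      using good that by force
    then have "card {l\<in>S. Q (w l)} \<le> card (S \<inter> A)"
      using fin by (intro card_mono) auto
    then show ?thesis using card_bad by linarith
  qed
  have "\<not> X + B < xs!f"
  proof
    assume "X + B < xs!f"
    then have "length xs - f \<le> length (filter (\<lambda>y. X + B < y) xs)"
      using sorted_length_filter_upward_closed[OF sorted, of f "\<lambda>y. X + B < y"] len by simp
    also have "\<dots> = card {l\<in>S. X + B < w l}"
      unfolding xs_def by (rule length_filter_sort_map_sorted_list_of_set[OF fin])
    also have "\<dots> \<le> f"
      by (rule few) (simp add: abs_if)
    finally show False by (simp add: len)
  qed
  moreover have "\<not> xs!f < X - B"
  proof
    assume "xs!f < X - B"
    then have "Suc f \<le> length (filter (\<lambda>y. y < X - B) xs)"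
      using sorted_length_filter_downward_closed[OF sorted, of f "\<lambda>y. y < X - B"] len by simp
    also have "\<dots> = card {l\<in>S. w l < X - B}"
      unfolding xs_def by (rule length_filter_sort_map_sorted_list_of_set[OF fin])
    also have "\<dots> \<le> f"
      by (rule few) (simp add: abs_if)
    finally show False by simp
  qed
  ultimately show ?thesis unfolding xs_def[symmetric] by linarith
qed

section \<open>Growth of propagated errors\<close>

lemma abs_power_mult_power_diff_le:
  fixes a \<rho> Q :: real
  assumes "0 < \<rho>" "\<bar>a\<bar> \<le> Q * \<rho>" "1 \<le> Q" "s \<le> t" "s \<le> k"
  shows "\<bar>a\<bar> ^ s * \<rho> ^ (k - s) \<le> Q ^ t * \<rho> ^ k"
proof -
  have "\<bar>a\<bar> ^ s * \<rho> ^ (k - s) \<le> (Q * \<rho>) ^ s * \<rho> ^ (k - s)"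
    using assms by (intro mult_right_mono power_mono) auto
  also have "\<dots> = Q ^ s * \<rho> ^ k"
    using \<open>s \<le> k\<close> by (simp add: power_mult_distrib mult.assoc power_add[symmetric])
  also have "\<dots> \<le> Q ^ t * \<rho> ^ k"
    using assms by (intro mult_right_mono power_increasing) auto
  finally show ?thesis .
qed

text \<open>A node with index t+1 takes the median of values with index at most t, each
  propagated over at most t steps; relative to the rate this multiplies the bound by
  at most Q^(t+1).\<close>

fun freshness_bound :: "real \<Rightarrow> real \<Rightarrow> nat \<Rightarrow> real" where
  "freshness_bound Q e 0 = e"
| "freshness_bound Q e (Suc t) = Q ^ Suc t * freshness_bound Q e t"

lemma freshness_bound_nonneg: "1 \<le> Q \<Longrightarrow> 0 \<le> e \<Longrightarrow> 0 \<le> freshness_bound Q e t"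
  by (induction t) auto

lemma freshness_bound_mono:
  assumes "1 \<le> Q" "0 \<le> e" "s \<le> t"
  shows "freshness_bound Q e s \<le> freshness_bound Q e t"
proof -
  have "freshness_bound Q e n \<le> freshness_bound Q e (Suc n)" for n
  proof -
    have "1 * freshness_bound Q e n \<le> Q ^ Suc n * freshness_bound Q e n"
      using assms(1) freshness_bound_nonneg[OF assms(1,2)] by (intro mult_right_mono one_le_power) auto
    then show ?thesis by simp
  qed
  then show ?thesis using lift_Suc_mono_le[of "freshness_bound Q e"] assms(3) by blast
qed

lemma J_set_subset: "J_set Nb k m \<subseteq> Nb"
  unfolding J_set_def by blast

lemma filt_tau_eq_Max:
  assumes "finite S" "S \<noteq> {}" "\<forall>l\<in>S. d1 l = d l + 1"
  shows "filt_tau S d = Some (Max (d1 ` S))"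
proof -
  have "d1 ` S = (\<lambda>l. d l + 1) ` S" using assms(3) by simp
  then show ?thesis
    using Max_add_commute[of S d 1] assms(1,2) unfolding filt_tau_def by auto
qed

lemma filt_x_cong:
  assumes "finite S" "\<forall>l\<in>S. v' l = v l \<and> ph' l = ph l"
  shows "filt_x f a k S v' ph' = filt_x f a k S v ph"
proof -
  have "map (\<lambda>l. a ^ (k - ph' l) * v' l) (sorted_list_of_set S) =
      map (\<lambda>l. a ^ (k - ph l) * v l) (sorted_list_of_set S)"
    using assms by (intro map_cong) auto
  then show ?thesis unfolding filt_x_def by (simp only:)
qed

lemma nonsource_step_idle:
  assumes "nonsource_step f a k Nb m x None M v d ph x1 \<tau>1 M1 v1 d1 ph1"
    and "card M + card (J_set Nb k m - M) < 2*f+1"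
  defines "J \<equiv> J_set Nb k m"
  shows "M1 = M \<union> J" "\<tau>1 = None"
    and "\<forall>l\<in>M1. l \<in> M \<and> v1 l = v l \<and> d1 l = d l + 1 \<and> ph1 l = ph l \<or>
       l \<in> J \<and> v1 l = rx (m l) \<and> d1 l = rt (m l) + 1 \<and> ph1 l = k"
  using assms unfolding nonsource_step_def Let_def by auto

lemma nonsource_step_first_filter:
  assumes step: "nonsource_step f a k Nb m x None M v d ph x1 \<tau>1 M1 v1 d1 ph1"
    and "\<not> card M + card (J_set Nb k m - M) < 2*f+1"
    and "finite M" "card M \<le> 2*f+1" "finite Nb"
  defines "J \<equiv> J_set Nb k m"
  shows "M1 \<subseteq> M \<union> J"
    and "\<forall>l\<in>M1. l \<in> M \<and> v1 l = v l \<and> d1 l = d l + 1 \<and> ph1 l = ph l \<or>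
       l \<in> J \<and> v1 l = rx (m l) \<and> d1 l = rt (m l) + 1 \<and> ph1 l = k"
    and "card M1 = 2*f+1" "\<tau>1 = Some (Max (d1 ` M1))" "x1 = filt_x f a k M1 v1 ph1"
proof -
  obtain B v' d' ph' where B: "B \<subseteq> J - M" "card B = 2*f+1 - card M" "M1 = M \<union> B"
    and stored: "\<forall>l\<in>M \<union> B. v1 l = v' l \<and> d1 l = d' l + 1 \<and> ph1 l = ph' l"
    and old: "\<forall>l\<in>M. v' l = v l \<and> d' l = d l \<and> ph' l = ph l"
    and new: "\<forall>l\<in>B. v' l = rx (m l) \<and> d' l = rt (m l) \<and> ph' l = k"
    and filt: "\<tau>1 = filt_tau M1 d'" "x1 = filt_x f a k M1 v' ph'"
    using assms(1,2) unfolding nonsource_step_def J_def Let_def by auto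
  show "M1 \<subseteq> M \<union> J" using B by blast
  show "\<forall>l\<in>M1. l \<in> M \<and> v1 l = v l \<and> d1 l = d l + 1 \<and> ph1 l = ph l \<or>
       l \<in> J \<and> v1 l = rx (m l) \<and> d1 l = rt (m l) + 1 \<and> ph1 l = k"
    using B stored old new by auto
  have "B \<subseteq> Nb"
    using B(1) J_set_subset unfolding J_def by blast
  then have "finite B"
    using \<open>finite Nb\<close> by (rule finite_subset)
  then have fin: "finite M1" using B(3) \<open>finite M\<close> by simp
  have "M \<inter> B = {}"
    using B(1) by blast
  then have "card M1 = card M + card B"
    unfolding B(3) using card_Un_disjoint[OF \<open>finite M\<close> \<open>finite B\<close>] by blast
  then show card: "card M1 = 2*f+1"
    using B(2) \<open>card M \<le> 2*f+1\<close> by simp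
  then have "M1 \<noteq> {}" by auto
  then show "\<tau>1 = Some (Max (d1 ` M1))"
    unfolding filt(1) by (rule filt_tau_eq_Max[OF fin]) (use stored B(3) in simp)
  show "x1 = filt_x f a k M1 v1 ph1"
    unfolding filt(2) using filt_x_cong[OF fin] stored B(3) by simp
qed

text \<open>The ranking index idx of \<^const>\<open>nonsource_step\<close> in the case \<tau> \<noteq> \<omega>.\<close>

definition refreshed_index :: "nat set \<Rightarrow> (nat \<Rightarrow> nat) \<Rightarrow> nat set \<Rightarrow> (nat \<Rightarrow> msg) \<Rightarrow> nat \<Rightarrow> nat" where
  "refreshed_index M d J m l =
     (if l \<in> M then (if l \<in> J \<and> rt (m l) < d l then rt (m l) else d l) else rt (m l))"

lemma refreshed_index_le_stored: "l \<in> M \<Longrightarrow> refreshed_index M d J m l \<le> d l"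
  unfolding refreshed_index_def by auto

lemma refreshed_index_le_reported: "l \<in> J \<Longrightarrow> refreshed_index M d J m l \<le> rt (m l)"
  unfolding refreshed_index_def by auto

lemma nonsource_step_refreshE:
  assumes "nonsource_step f a k Nb m x (Some t0) M v d ph x1 \<tau>1 M1 v1 d1 ph1"
  defines "J \<equiv> J_set Nb k m"
  obtains v' d' ph' where "M1 \<subseteq> M \<union> J" "card M1 = 2*f+1"
    "\<forall>l\<in>M1. v1 l = v' l \<and> d1 l = d' l + 1 \<and> ph1 l = ph' l"
    "\<forall>l\<in>M1. d' l = refreshed_index M d J m l"
    "\<forall>l\<in>M1. \<forall>l'\<in>(M \<union> J) - M1. refreshed_index M d J m l \<le> refreshed_index M d J m l'"
    "\<forall>l\<in>M1. l \<in> M \<and> v' l = v l \<and> d' l = d l \<and> ph' l = ph l \<or>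
       l \<in> J \<and> v' l = rx (m l) \<and> d' l = rt (m l) \<and> ph' l = k"
    "\<tau>1 = filt_tau M1 d'" "x1 = filt_x f a k M1 v' ph'"
proof -
  let ?refresh = "\<lambda>l. (l \<in> J \<and> l \<in> M) \<and> rt (m l) < d l"
  have idx: "(if l \<in> M then if ?refresh l then rt (m l) else d l else rt (m l))
      = refreshed_index M d J m l" for l
    unfolding refreshed_index_def by auto
  obtain v' d' ph' where M1: "M1 \<subseteq> M \<union> J" "card M1 = 2*f+1"
    and stored: "\<forall>l\<in>M1. v1 l = v' l \<and> d1 l = d' l + 1 \<and> ph1 l = ph' l"
    and order: "\<forall>l\<in>M1. \<forall>l'\<in>M \<union> J - M1.
        (if l \<in> M then if ?refresh l then rt (m l) else d l else rt (m l))
        \<le> (if l' \<in> M then if ?refresh l' then rt (m l') else d l' else rt (m l'))"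
    and kept: "\<forall>l\<in>M1 \<inter> M. v' l = (if ?refresh l then rx (m l) else v l) \<and>
        d' l = (if ?refresh l then rt (m l) else d l) \<and> ph' l = (if ?refresh l then k else ph l)"
    and new: "\<forall>l\<in>M1 - M. v' l = rx (m l) \<and> d' l = rt (m l) \<and> ph' l = k"
    and "\<tau>1 = filt_tau M1 d'" "x1 = filt_x f a k M1 v' ph'"
    using assms(1) unfolding nonsource_step_def J_def Let_def
    by (simp only: option.case mem_Collect_eq Int_iff) blast
  moreover have "\<forall>l\<in>M1. d' l = refreshed_index M d J m l \<and>
      (l \<in> M \<and> v' l = v l \<and> d' l = d l \<and> ph' l = ph l \<or>
       l \<in> J \<and> v' l = rx (m l) \<and> d' l = rt (m l) \<and> ph' l = k)"
  proof
    fix l assume l: "l \<in> M1"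
    then consider "l \<in> M" "?refresh l" | "l \<in> M" "\<not> ?refresh l" | "l \<notin> M" "l \<in> J"
      using M1(1) by blast
    then show "d' l = refreshed_index M d J m l \<and>
      (l \<in> M \<and> v' l = v l \<and> d' l = d l \<and> ph' l = ph l \<or>
       l \<in> J \<and> v' l = rx (m l) \<and> d' l = rt (m l) \<and> ph' l = k)"
      using kept new l unfolding refreshed_index_def by cases auto
  qed
  ultimately show ?thesis using that order unfolding idx by blast
qed

lemma nonsource_step_refresh:
  assumes step: "nonsource_step f a k Nb m x (Some t0) M v d ph x1 \<tau>1 M1 v1 d1 ph1"
  defines "J \<equiv> J_set Nb k m"
  shows "M1 \<subseteq> M \<union> J" "card M1 = 2*f+1"
    and "\<forall>l\<in>M1. d1 l = refreshed_index M d J m l + 1"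
    and "\<forall>l\<in>M1. \<forall>l'\<in>(M \<union> J) - M1. refreshed_index M d J m l \<le> refreshed_index M d J m l'"
    and "\<forall>l\<in>M1. l \<in> M \<and> v1 l = v l \<and> d1 l = d l + 1 \<and> ph1 l = ph l \<or>
       l \<in> J \<and> v1 l = rx (m l) \<and> d1 l = rt (m l) + 1 \<and> ph1 l = k"
    and "\<tau>1 = Some (Max (d1 ` M1))" "x1 = filt_x f a k M1 v1 ph1"
proof -
  obtain v' d' ph' where sub: "M1 \<subseteq> M \<union> J" and card: "card M1 = 2*f+1"
    and stored: "\<forall>l\<in>M1. v1 l = v' l \<and> d1 l = d' l + 1 \<and> ph1 l = ph' l"
    and idx: "\<forall>l\<in>M1. d' l = refreshed_index M d J m l"
    and order: "\<forall>l\<in>M1. \<forall>l'\<in>(M \<union> J) - M1. refreshed_index M d J m l \<le> refreshed_index M d J m l'"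
    and origin: "\<forall>l\<in>M1. l \<in> M \<and> v' l = v l \<and> d' l = d l \<and> ph' l = ph l \<or>
       l \<in> J \<and> v' l = rx (m l) \<and> d' l = rt (m l) \<and> ph' l = k"
    and filt: "\<tau>1 = filt_tau M1 d'" "x1 = filt_x f a k M1 v' ph'"
    by (rule nonsource_step_refreshE[OF step, folded J_def])
  show "M1 \<subseteq> M \<union> J" "card M1 = 2*f+1"
    and "\<forall>l\<in>M1. \<forall>l'\<in>(M \<union> J) - M1. refreshed_index M d J m l \<le> refreshed_index M d J m l'"
    by fact+
  show "\<forall>l\<in>M1. d1 l = refreshed_index M d J m l + 1"
    using stored idx by simp
  show "\<forall>l\<in>M1. l \<in> M \<and> v1 l = v l \<and> d1 l = d l + 1 \<and> ph1 l = ph l \<or>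
       l \<in> J \<and> v1 l = rx (m l) \<and> d1 l = rt (m l) + 1 \<and> ph1 l = k"
    using stored origin by auto
  have fin: "finite M1" using card by (intro card_ge_0_finite) simp
  have "M1 \<noteq> {}" using card by auto
  then show "\<tau>1 = Some (Max (d1 ` M1))"
    unfolding filt(1) by (rule filt_tau_eq_Max[OF fin]) (use stored in simp)
  show "x1 = filt_x f a k M1 v1 ph1"
    unfolding filt(2) using filt_x_cong[OF fin] stored by simp
qed

lemma nonsource_step_waiting:
  assumes step: "nonsource_step f a k Nb m x \<tau> M v d ph x1 None M1 v1 d1 ph1"
    and "finite M" "card M \<le> 2*f+1" "finite Nb"
  shows "\<tau> = None \<and> M1 = M \<union> J_set Nb k m \<and> card (M \<union> J_set Nb k m) < 2*f+1"
proof (cases \<tau>)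
  case None
  show ?thesis
  proof (cases "card M + card (J_set Nb k m - M) < 2*f+1")
    case True
    have "finite (J_set Nb k m)"
      using \<open>finite Nb\<close> J_set_subset by (rule finite_subset[rotated])
    then have "card (M \<union> J_set Nb k m) = card M + card (J_set Nb k m - M)"
      using \<open>finite M\<close> card_Un_disjoint[of M "J_set Nb k m - M"] by (simp add: Un_Diff_cancel)
    then show ?thesis using nonsource_step_idle[OF step[unfolded None] True] None True by simp
  next
    case False
    then show ?thesis
      using nonsource_step_first_filter(4)[OF step[unfolded None] False assms(2-4)] by simp
  qed
next
  case (Some t0)
  then show ?thesis
    using nonsource_step_refresh(6)[OF step[unfolded Some]] by simp
qed

lemma nonsource_step_entries:
  assumes step: "nonsource_step f a k Nb m x \<tau> M v d ph x1 \<tau>1 M1 v1 d1 ph1"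
    and "finite M" "card M \<le> 2*f+1" "finite Nb"
  defines "J \<equiv> J_set Nb k m"
  shows "M1 \<subseteq> M \<union> J \<and>
    (\<forall>l\<in>M1. l \<in> M \<and> v1 l = v l \<and> d1 l = d l + 1 \<and> ph1 l = ph l \<or>
       l \<in> J \<and> v1 l = rx (m l) \<and> d1 l = rt (m l) + 1 \<and> ph1 l = k) \<and>
    (\<tau>1 \<noteq> None \<longrightarrow> card M1 = 2*f+1 \<and> \<tau>1 = Some (Max (d1 ` M1)) \<and> x1 = filt_x f a k M1 v1 ph1)"
proof (cases \<tau>)
  case None
  show ?thesis
  proof (cases "card M + card (J - M) < 2*f+1")
    case True
    from nonsource_step_idle[OF step[unfolded None] True[unfolded J_def], folded J_def]
    show ?thesis by simp
  next
    case False
    from nonsource_step_first_filter[OF step[unfolded None] False[unfolded J_def] assms(2-4),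
        folded J_def]
    show ?thesis by simp
  qed
next
  case (Some t0)
  from nonsource_step_refresh[OF step[unfolded Some], folded J_def]
  show ?thesis by simp
qed

lemma nonsource_step_small_index_kept:
  assumes step: "nonsource_step f a k Nb m x (Some t0) M v d ph x1 \<tau>1 M1 v1 d1 ph1"
    and small: "l \<in> M \<and> d l \<le> X \<or> l \<in> J_set Nb k m \<and> rt (m l) \<le> X"
  shows "l \<in> M1 \<and> d1 l \<le> X + 1 \<or> (\<forall>l'\<in>M1. d1 l' \<le> X + 1)"
proof -
  let ?idx = "refreshed_index M d (J_set Nb k m) m"
  note refreshed = nonsource_step_refresh(3,4)[OF step]
  from small have "?idx l \<le> X"
  proof
    assume "l \<in> M \<and> d l \<le> X"
    then show ?thesis using refreshed_index_le_stored[of l M d "J_set Nb k m" m] by linarith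
  next
    assume "l \<in> J_set Nb k m \<and> rt (m l) \<le> X"
    then show ?thesis using refreshed_index_le_reported[of l "J_set Nb k m" M d m] by linarith
  qed
  show ?thesis
  proof (cases "l \<in> M1")
    case True
    then show ?thesis using refreshed \<open>?idx l \<le> X\<close> by simp
  next
    case False
    then have "l \<in> (M \<union> J_set Nb k m) - M1" using small by blast
    have "\<forall>l'\<in>M1. d1 l' \<le> X + 1"
    proof
      fix l' assume "l' \<in> M1"
      then have "?idx l' \<le> ?idx l" using refreshed \<open>l \<in> (M \<union> J_set Nb k m) - M1\<close> by blast
      then show "d1 l' \<le> X + 1" using refreshed \<open>l' \<in> M1\<close> \<open>?idx l \<le> X\<close> by simp
    qed
    then show ?thesis ..
  qed
qed

lemma nonsource_step_index_le_Max:
  assumes step: "nonsource_step f a k Nb m x (Some t0) M v d ph x1 \<tau>1 M1 v1 d1 ph1"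
    and "finite M" "card M = 2*f+1" "l \<in> M1"
  shows "d1 l \<le> Max (d ` M) + 1"
proof -
  let ?idx = "refreshed_index M d (J_set Nb k m) m"
  note refreshed = nonsource_step_refresh(2-4)[OF step]
  have stored_le_Max: "?idx l0 \<le> Max (d ` M)" if "l0 \<in> M" for l0
  proof -
    have "d l0 \<le> Max (d ` M)" using \<open>finite M\<close> that by simp
    then show ?thesis using refreshed_index_le_stored[OF that] by (rule order.trans[rotated])
  qed
  have "?idx l \<le> Max (d ` M)"
  proof (cases "l \<in> M")
    case True
    then show ?thesis by (rule stored_le_Max)
  next
    case False
    have "finite M1" using refreshed by (intro card_ge_0_finite) simp
    have "\<not> M \<subseteq> M1"
    proof
      assume "M \<subseteq> M1"
      then have "M = M1"
        using card_seteq[OF \<open>finite M1\<close>] \<open>card M = 2*f+1\<close> refreshed by simp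
      then show False using False \<open>l \<in> M1\<close> by simp
    qed
    then obtain l0 where "l0 \<in> M" "l0 \<notin> M1" by blast
    then have "?idx l \<le> ?idx l0" using refreshed \<open>l \<in> M1\<close> by blast
    then show ?thesis using stored_le_Max[OF \<open>l0 \<in> M\<close>] by linarith
  qed
  then show ?thesis using refreshed \<open>l \<in> M1\<close> by simp
qed

locale alg2_execution =
  fixes V :: "nat set" and E :: "nat \<Rightarrow> (nat \<times> nat) set" and f :: nat and a :: real
    and c :: "nat \<Rightarrow> real" and L :: "nat \<Rightarrow> real" and A :: "nat set"
    and adv :: "nat \<Rightarrow> nat \<Rightarrow> nat \<Rightarrow> msg" and x :: "nat \<Rightarrow> real"
    and xh :: "nat \<Rightarrow> nat \<Rightarrow> real" and tau :: "nat \<Rightarrow> nat \<Rightarrow> nat option"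
    and M :: "nat \<Rightarrow> nat \<Rightarrow> nat set" and v :: "nat \<Rightarrow> nat \<Rightarrow> nat \<Rightarrow> real"
    and d :: "nat \<Rightarrow> nat \<Rightarrow> nat \<Rightarrow> nat" and ph :: "nat \<Rightarrow> nat \<Rightarrow> nat \<Rightarrow> nat"
  assumes finite_V: "finite V" and E_subset: "\<And>k. E k \<subseteq> V \<times> V" and A_subset: "A \<subseteq> V"
    and card_A: "card A \<le> f"
    and exec: "alg2_exec V E f a c L A adv x xh tau M v d ph"
begin

definition rcv :: "nat \<Rightarrow> nat \<Rightarrow> nat \<Rightarrow> msg" where
  "rcv i k l = reported A adv xh tau k l i"

definition J :: "nat \<Rightarrow> nat \<Rightarrow> nat set" where
  "J i k = J_set (in_nbrs (E k) i) k (rcv i k)"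

lemma finite_A: "finite A"
  using A_subset finite_V by (rule finite_subset)

lemma plant_Suc: "x (Suc k) = a * x k"
  using exec unfolding alg2_exec_def by blast

lemma plant_add: "x (j + s) = a ^ s * x j"
  by (induction s) (auto simp: plant_Suc)

lemma source_node:
  "i \<in> V - A \<Longrightarrow> c i \<noteq> 0 \<Longrightarrow>
    tau i k = Some 0 \<and> xh i (Suc k) = a * xh i k + L i * (c i * x k - c i * xh i k)"
  using exec unfolding alg2_exec_def by blast

lemma nonsource_init: "i \<in> V - A \<Longrightarrow> c i = 0 \<Longrightarrow> tau i 0 = None \<and> M i 0 = {}"
  using exec unfolding alg2_exec_def by blast

lemma nonsource_node_step:
  "i \<in> V - A \<Longrightarrow> c i = 0 \<Longrightarrow>
    nonsource_step f a k (in_nbrs (E k) i) (rcv i k)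
      (xh i k) (tau i k) (M i k) (v i k) (d i k) (ph i k)
      (xh i (Suc k)) (tau i (Suc k)) (M i (Suc k)) (v i (Suc k)) (d i (Suc k)) (ph i (Suc k))"
  using exec unfolding alg2_exec_def rcv_def[abs_def] by blast

lemma in_nbrs_subset_V: "in_nbrs (E k) i \<subseteq> V"
  using E_subset unfolding in_nbrs_def by blast

lemma finite_in_nbrs: "finite (in_nbrs (E k) i)"
  using finite_V in_nbrs_subset_V by (rule finite_subset[rotated])

lemma J_subset_V: "J i k \<subseteq> V"
  using in_nbrs_subset_V J_set_subset unfolding J_def by blast

lemma J_index_le: "l \<in> J i k \<Longrightarrow> rt (rcv i k l) \<le> k"
  unfolding J_def J_set_def rt_def by auto

lemma J_regular: "l \<in> J i k \<Longrightarrow> l \<notin> A \<Longrightarrow> tau l k = Some (rt (rcv i k l)) \<and> rx (rcv i k l) = xh l k"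
  unfolding J_def J_set_def rt_def rx_def rcv_def reported_def by auto

lemma J_intro:
  "l \<in> in_nbrs (E k) i \<Longrightarrow> l \<notin> A \<Longrightarrow> tau l k = Some t \<Longrightarrow> t \<le> k \<Longrightarrow>
    l \<in> J i k \<and> rt (rcv i k l) = t"
  unfolding J_def J_set_def rt_def rcv_def reported_def by auto

definition entry_sound :: "nat \<Rightarrow> nat \<Rightarrow> real \<Rightarrow> nat \<Rightarrow> nat \<Rightarrow> bool" where
  "entry_sound k l vv dd pp \<longleftrightarrow> pp \<le> k \<and>
     (\<exists>t. t \<le> pp \<and> dd = t + (k - pp) \<and> (l \<notin> A \<longrightarrow> tau l pp = Some t \<and> vv = xh l pp))"

lemma entry_sound_received: "l \<in> J i k \<Longrightarrow> entry_sound k l (rx (rcv i k l)) (rt (rcv i k l)) k"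
  unfolding entry_sound_def using J_index_le J_regular by auto

lemma entry_sound_Suc:
  assumes "entry_sound k l vv dd pp"
  shows "entry_sound (Suc k) l vv (dd + 1) pp"
  using assms unfolding entry_sound_def by (auto simp: Suc_diff_le)

lemma entry_sound_index_le: "entry_sound k l vv dd pp \<Longrightarrow> dd \<le> k"
  unfolding entry_sound_def by auto

definition nonsource_inv :: "nat \<Rightarrow> nat \<Rightarrow> bool" where
  "nonsource_inv i k \<longleftrightarrow> finite (M i k) \<and> M i k \<subseteq> V \<and>
    (tau i k = None \<longrightarrow> card (M i k) < 2*f+1) \<and>
    (tau i k \<noteq> None \<longrightarrow> card (M i k) = 2*f+1 \<and> tau i k = Some (Max (d i k ` M i k))) \<and>
    (\<forall>l\<in>M i k. entry_sound k l (v i k l) (d i k l) (ph i k l))"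

text \<open>The filtering step at time k uses the stored indices before they are incremented,
  hence the entries stored at time k+1 are sound at time k with index d - 1.\<close>

lemma nonsource_step_sound:
  assumes i: "i \<in> V - A" "c i = 0" and inv: "nonsource_inv i k"
  shows "M i (Suc k) \<subseteq> M i k \<union> J i k \<and>
    (\<forall>l\<in>M i (Suc k). 0 < d i (Suc k) l \<and>
       entry_sound k l (v i (Suc k) l) (d i (Suc k) l - 1) (ph i (Suc k) l)) \<and>
    (tau i (Suc k) \<noteq> None \<longrightarrow> card (M i (Suc k)) = 2*f+1 \<and>
       tau i (Suc k) = Some (Max (d i (Suc k) ` M i (Suc k))) \<and>
       xh i (Suc k) = filt_x f a k (M i (Suc k)) (v i (Suc k)) (ph i (Suc k)))"
proof -
  have "finite (M i k)" "card (M i k) \<le> 2*f+1"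
    using inv unfolding nonsource_inv_def by auto
  note step = nonsource_step_entries[OF nonsource_node_step[OF i] this finite_in_nbrs, folded J_def]
  have "0 < d i (Suc k) l \<and> entry_sound k l (v i (Suc k) l) (d i (Suc k) l - 1) (ph i (Suc k) l)"
    if "l \<in> M i (Suc k)" for l
    using step that inv entry_sound_received unfolding nonsource_inv_def by auto
  with step show ?thesis by blast
qed

lemma nonsource_waiting:
  assumes i: "i \<in> V - A" "c i = 0" and inv: "nonsource_inv i k" and "tau i (Suc k) = None"
  shows "tau i k = None \<and> M i (Suc k) = M i k \<union> J i k \<and> card (M i k \<union> J i k) < 2*f+1"
proof -
  have "finite (M i k)" "card (M i k) \<le> 2*f+1"
    using inv unfolding nonsource_inv_def by auto
  from nonsource_step_waiting[OF nonsource_node_step[OF i, of k, unfolded \<open>tau i (Suc k) = None\<close>]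
      this finite_in_nbrs]
  show ?thesis unfolding J_def .
qed

lemma nonsource_inv_Suc:
  assumes i: "i \<in> V - A" "c i = 0" and inv: "nonsource_inv i k"
  shows "nonsource_inv i (Suc k)"
proof -
  note step = nonsource_step_sound[OF i inv]
  have "M i (Suc k) \<subseteq> V"
    using step inv J_subset_V unfolding nonsource_inv_def by blast
  moreover from this have "finite (M i (Suc k))"
    using finite_V by (rule finite_subset)
  moreover have "tau i (Suc k) = None \<longrightarrow> card (M i (Suc k)) < 2*f+1"
    using nonsource_waiting[OF i inv] by auto
  moreover have "entry_sound (Suc k) l (v i (Suc k) l) (d i (Suc k) l) (ph i (Suc k) l)"
    if "l \<in> M i (Suc k)" for l
    using entry_sound_Suc[of k l] step that by fastforce
  ultimately show ?thesis
    using step unfolding nonsource_inv_def by blast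
qed

lemma nonsource_inv_holds: "i \<in> V - A \<Longrightarrow> c i = 0 \<Longrightarrow> nonsource_inv i k"
proof (induction k)
  case 0
  then show ?case using nonsource_init unfolding nonsource_inv_def by simp
next
  case (Suc k)
  then show ?case using nonsource_inv_Suc by blast
qed

lemma nonsource_filtered:
  assumes i: "i \<in> V - A" "c i = 0" and tau: "tau i (Suc k) = Some t"
  shows "0 < t \<and> M i (Suc k) \<subseteq> V \<and> card (M i (Suc k)) = 2*f+1 \<and>
    (\<forall>l\<in>M i (Suc k). entry_sound k l (v i (Suc k) l) (d i (Suc k) l - 1) (ph i (Suc k) l) \<and>
       d i (Suc k) l - 1 \<le> t - 1) \<and>
    xh i (Suc k) = filt_x f a k (M i (Suc k)) (v i (Suc k)) (ph i (Suc k))"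
proof -
  note step = nonsource_step_sound[OF i nonsource_inv_holds[OF i], of k]
  have card: "card (M i (Suc k)) = 2*f+1" and t: "t = Max (d i (Suc k) ` M i (Suc k))"
    using step tau by simp_all
  have fin: "finite (M i (Suc k))" and "M i (Suc k) \<subseteq> V"
    using nonsource_inv_holds[OF i, of "Suc k"] unfolding nonsource_inv_def by simp_all
  have le_t: "0 < d i (Suc k) l \<and> d i (Suc k) l \<le> t" if "l \<in> M i (Suc k)" for l
    using step that fin unfolding t by simp
  have "M i (Suc k) \<noteq> {}" using card by auto
  then have "0 < t" using le_t by fastforce
  then show ?thesis using step tau le_t card \<open>M i (Suc k) \<subseteq> V\<close> by (auto intro: diff_le_mono)
qed

context
  fixes \<rho> Q e :: real
  assumes rho_pos: "0 < \<rho>" and Q_ge_1: "1 \<le> Q" and growth_le: "\<bar>a\<bar> \<le> Q * \<rho>"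
    and e_nonneg: "0 \<le> e" and initial_error_le: "\<And>i. i \<in> V - A \<Longrightarrow> \<bar>xh i 0 - x 0\<bar> \<le> e"
    and source_gain: "\<And>i. c i \<noteq> 0 \<Longrightarrow> a - L i * c i = \<rho>"
begin

lemma source_error:
  assumes i: "i \<in> V - A" "c i \<noteq> 0"
  shows "xh i k - x k = \<rho> ^ k * (xh i 0 - x 0)"
proof (induction k)
  case (Suc k)
  have "xh i (Suc k) - x (Suc k) = (a - L i * c i) * (xh i k - x k)"
    using source_node[OF i, of k] plant_Suc[of k] by (simp add: algebra_simps)
  then show ?case using Suc source_gain[OF i(2)] by simp
qed simp

lemma entry_error:
  assumes sound: "entry_sound k l vv dd pp" and l: "l \<in> V - A" and "dd \<le> t"
    and bound: "\<And>\<tau>. tau l pp = Some \<tau> \<Longrightarrow> \<bar>xh l pp - x pp\<bar> \<le> freshness_bound Q e \<tau> * \<rho> ^ pp"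
  shows "\<bar>a ^ (k - pp) * vv - x k\<bar> \<le> Q ^ t * freshness_bound Q e t * \<rho> ^ k"
proof -
  obtain \<tau> where "pp \<le> k" "\<tau> \<le> pp" "dd = \<tau> + (k - pp)" "tau l pp = Some \<tau>" "vv = xh l pp"
    using sound l unfolding entry_sound_def by blast
  have plant: "x k = a ^ (k - pp) * x pp"
    using plant_add[of pp "k - pp"] \<open>pp \<le> k\<close> by simp
  have "\<bar>xh l pp - x pp\<bar> \<le> freshness_bound Q e \<tau> * \<rho> ^ pp"
    using bound \<open>tau l pp = Some \<tau>\<close> .
  also have "\<dots> \<le> freshness_bound Q e t * \<rho> ^ pp"
    using freshness_bound_mono[OF Q_ge_1 e_nonneg, of \<tau> t] \<open>dd = \<tau> + (k - pp)\<close> \<open>dd \<le> t\<close> rho_pos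
    by (intro mult_right_mono) auto
  finally have "\<bar>a ^ (k - pp) * vv - x k\<bar> \<le> \<bar>a\<bar> ^ (k - pp) * (freshness_bound Q e t * \<rho> ^ pp)"
    unfolding plant \<open>vv = xh l pp\<close>
    by (simp add: right_diff_distrib[symmetric] abs_mult power_abs mult_left_mono)
  also have "\<dots> = (\<bar>a\<bar> ^ (k - pp) * \<rho> ^ (k - (k - pp))) * freshness_bound Q e t"
    using \<open>pp \<le> k\<close> by simp
  also have "\<dots> \<le> (Q ^ t * \<rho> ^ k) * freshness_bound Q e t"
    using abs_power_mult_power_diff_le[OF rho_pos growth_le Q_ge_1, of "k - pp" t k]
      \<open>dd = \<tau> + (k - pp)\<close> \<open>dd \<le> t\<close> freshness_bound_nonneg[OF Q_ge_1 e_nonneg]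
    by (intro mult_right_mono) auto
  finally show ?thesis by (simp add: ac_simps)
qed

lemma filtered_error:
  assumes "S \<subseteq> V" "card S = 2*f+1"
    and entries: "\<forall>l\<in>S. entry_sound k l (vv l) (dd l) (pp l) \<and> dd l \<le> t"
    and bound: "\<And>l j \<tau>. l \<in> V - A \<Longrightarrow> j \<le> k \<Longrightarrow> tau l j = Some \<tau> \<Longrightarrow>
      \<bar>xh l j - x j\<bar> \<le> freshness_bound Q e \<tau> * \<rho> ^ j"
  shows "\<bar>filt_x f a k S vv pp - x (Suc k)\<bar> \<le> freshness_bound Q e (Suc t) * \<rho> ^ Suc k"
proof -
  define w where "w = (\<lambda>l. a ^ (k - pp l) * vv l)"
  have "finite S"
    using \<open>S \<subseteq> V\<close> finite_V by (rule finite_subset)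
  have "card (S \<inter> A) \<le> card A"
    using finite_A by (intro card_mono) auto
  then have "card (S \<inter> A) \<le> f" using card_A by linarith
  have median: "\<bar>sort (map w (sorted_list_of_set S)) ! f - x k\<bar> \<le> Q ^ t * freshness_bound Q e t * \<rho> ^ k"
  proof (rule sorted_median_close[OF \<open>finite S\<close> \<open>card S = 2*f+1\<close> \<open>card (S \<inter> A) \<le> f\<close>])
    fix l assume "l \<in> S" "l \<notin> A"
    then have sound: "entry_sound k l (vv l) (dd l) (pp l)" "dd l \<le> t"
      using entries by auto
    then have "pp l \<le> k" unfolding entry_sound_def by simp
    show "\<bar>w l - x k\<bar> \<le> Q ^ t * freshness_bound Q e t * \<rho> ^ k"
      unfolding w_def
      by (rule entry_error[OF sound(1) _ sound(2)])
        (use \<open>l \<in> S\<close> \<open>l \<notin> A\<close> \<open>S \<subseteq> V\<close> \<open>pp l \<le> k\<close> bound in auto)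
  qed
  have "\<bar>filt_x f a k S vv pp - x (Suc k)\<bar> = \<bar>a\<bar> * \<bar>sort (map w (sorted_list_of_set S)) ! f - x k\<bar>"
    unfolding filt_x_def plant_Suc w_def by (simp add: right_diff_distrib[symmetric] abs_mult)
  also have "\<dots> \<le> (Q * \<rho>) * (Q ^ t * freshness_bound Q e t * \<rho> ^ k)"
    using median growth_le by (intro mult_mono) auto
  also have "\<dots> = freshness_bound Q e (Suc t) * \<rho> ^ Suc k"
    by (simp add: ac_simps)
  finally show ?thesis .
qed

theorem estimate_error_le:
  "i \<in> V - A \<Longrightarrow> tau i k = Some t \<Longrightarrow> \<bar>xh i k - x k\<bar> \<le> freshness_bound Q e t * \<rho> ^ k"
proof (induction k arbitrary: i t rule: less_induct)
  case (less k)
  show ?case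
  proof (cases "c i = 0")
    case False
    then have "t = 0" using source_node[OF less.prems(1) False, of k] less.prems(2) by simp
    have "\<bar>xh i k - x k\<bar> = \<rho> ^ k * \<bar>xh i 0 - x 0\<bar>"
      unfolding source_error[OF less.prems(1) False, of k] using rho_pos by (simp add: abs_mult)
    also have "\<dots> \<le> \<rho> ^ k * e"
      using initial_error_le[OF less.prems(1)] rho_pos by (intro mult_left_mono) auto
    finally show ?thesis using \<open>t = 0\<close> by (simp add: mult.commute)
  next
    case True
    obtain k' where k: "k = Suc k'"
      using less.prems(2) nonsource_init[OF less.prems(1) True] by (cases k) auto
    have "0 < t" and sub: "M i k \<subseteq> V" and card: "card (M i k) = 2*f+1"
      and entries: "\<forall>l\<in>M i k. entry_sound k' l (v i k l) (d i k l - 1) (ph i k l) \<and> d i k l - 1 \<le> t - 1"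
      and xh: "xh i k = filt_x f a k' (M i k) (v i k) (ph i k)"
      using nonsource_filtered[OF less.prems(1) True less.prems(2)[unfolded k]] unfolding k by simp_all
    have bound: "\<bar>xh l j - x j\<bar> \<le> freshness_bound Q e \<tau> * \<rho> ^ j"
      if "l \<in> V - A" "j \<le> k'" "tau l j = Some \<tau>" for l j \<tau>
      using less.IH[of j l \<tau>] that k by simp
    have "\<bar>filt_x f a k' (M i k) (v i k) (ph i k) - x (Suc k')\<bar>
        \<le> freshness_bound Q e (Suc (t - 1)) * \<rho> ^ Suc k'"
      by (rule filtered_error[OF sub card entries]) (rule bound)
    then show ?thesis using xh k \<open>0 < t\<close> by simp
  qed
qed

end

section \<open>Freshness indices\<close>

lemma index_Suc_ne_None:
  assumes i: "i \<in> V - A" and "tau i k \<noteq> None"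
  shows "tau i (Suc k) \<noteq> None"
proof (cases "c i = 0")
  case True
  show ?thesis
  proof
    assume "tau i (Suc k) = None"
    then show False
      using nonsource_waiting[OF i True nonsource_inv_holds[OF i True]] assms(2) by simp
  qed
next
  case False
  then show ?thesis using source_node[OF i False] by simp
qed

lemma index_ne_None_mono:
  assumes i: "i \<in> V - A" and "tau i k \<noteq> None" "k \<le> k'"
  shows "tau i k' \<noteq> None"
  using \<open>k \<le> k'\<close>
proof (induction k' rule: dec_induct)
  case base
  then show ?case using assms(2) .
next
  case (step n)
  then show ?case using index_Suc_ne_None[OF i] by blast
qed

lemma nonsource_indexed:
  assumes i: "i \<in> V - A" "c i = 0" and "tau i k \<noteq> None"
  shows "finite (M i k) \<and> card (M i k) = 2*f+1 \<and> tau i k = Some (Max (d i k ` M i k))"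
  using nonsource_inv_holds[OF i, of k] assms(3) unfolding nonsource_inv_def by blast

lemma index_le:
  assumes i: "i \<in> V - A" and "tau i k = Some t"
  shows "t \<le> k"
proof (cases "c i = 0")
  case True
  have "tau i k \<noteq> None" using assms(2) by simp
  note indexed = nonsource_indexed[OF i True this]
  have "\<forall>l\<in>M i k. d i k l \<le> k"
    using nonsource_inv_holds[OF i True, of k] entry_sound_index_le unfolding nonsource_inv_def by blast
  moreover have "M i k \<noteq> {}" using indexed by auto
  ultimately show ?thesis using indexed assms(2) by (simp add: Max_le_iff)
next
  case False
  then show ?thesis using source_node[OF i False, of k] assms(2) by simp
qed

lemma index_Suc_le:
  assumes i: "i \<in> V - A" and "tau i k = Some t"
  shows "\<exists>t'. tau i (Suc k) = Some t' \<and> t' \<le> Suc t"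
proof (cases "c i = 0")
  case True
  have "tau i (Suc k) \<noteq> None"
    using index_Suc_ne_None[OF i] assms(2) by simp
  note now = nonsource_indexed[OF i True, of k] and later = nonsource_indexed[OF i True this]
  have "d i (Suc k) l \<le> Suc t" if "l \<in> M i (Suc k)" for l
    using nonsource_step_index_le_Max[OF nonsource_node_step[OF i True, of k, unfolded assms(2)] _ _ that]
      now assms(2) by simp
  moreover have "M i (Suc k) \<noteq> {}" using later by auto
  ultimately have "Max (d i (Suc k) ` M i (Suc k)) \<le> Suc t"
    using later by (simp add: Max_le_iff)
  then show ?thesis using later by blast
next
  case False
  then show ?thesis using source_node[OF i False] by simp
qed

text \<open>An index t at time k certifies that the estimate rests on source data from time
  k - t or later; informed_since i s k says that this time is at least s.\<close>

definition informed_since :: "nat \<Rightarrow> nat \<Rightarrow> nat \<Rightarrow> bool" where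
  "informed_since i s k \<longleftrightarrow> (\<exists>t. tau i k = Some t \<and> t + s \<le> k)"

lemma informed_since_mono:
  assumes i: "i \<in> V - A" and "informed_since i s k" "k \<le> k'"
  shows "informed_since i s k'"
  using \<open>k \<le> k'\<close>
proof (induction k' rule: dec_induct)
  case base
  then show ?case using assms(2) .
next
  case (step n)
  then obtain t where "tau i n = Some t" "t + s \<le> n"
    unfolding informed_since_def by blast
  moreover obtain t' where "tau i (Suc n) = Some t'" "t' \<le> Suc t"
    using index_Suc_le[OF i \<open>tau i n = Some t\<close>] by blast
  ultimately show ?case unfolding informed_since_def by auto
qed

lemma informed_if_stored_fresh:
  assumes i: "i \<in> V - A" "c i = 0" and "tau i k \<noteq> None" and fresh: "\<forall>l\<in>M i k. d i k l + s \<le> k"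
  shows "informed_since i s k"
proof -
  have "finite (M i k)" "M i k \<noteq> {}" and tau: "tau i k = Some (Max (d i k ` M i k))"
    using nonsource_indexed[OF i assms(3)] by auto
  then have "Max (d i k ` M i k) \<in> d i k ` M i k" by simp
  then show ?thesis using fresh tau unfolding informed_since_def by auto
qed

lemma received_while_waiting_stored:
  assumes i: "i \<in> V - A" "c i = 0" and "tau i k = None" "t < k" "l \<in> J i t"
  shows "l \<in> M i k"
proof -
  have waiting: "tau i (Suc n) = None \<and> M i (Suc n) = M i n \<union> J i n" if "n < k" for n
  proof -
    have "tau i (Suc n) = None"
      using index_ne_None_mono[OF i(1) _ Suc_leI[OF that]] \<open>tau i k = None\<close> by blast
    then show ?thesis using nonsource_waiting[OF i nonsource_inv_holds[OF i]] by blast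
  qed
  have "n \<le> k \<longrightarrow> l \<in> M i n" if "Suc t \<le> n" for n
    using that
  proof (induction n rule: dec_induct)
    case base
    then show ?case using waiting[OF \<open>t < k\<close>] \<open>l \<in> J i t\<close> by simp
  next
    case (step n)
    then show ?case using waiting[of n] by auto
  qed
  then show ?thesis using \<open>t < k\<close> by simp
qed

lemma index_assigned_by_senders:
  assumes i: "i \<in> V - A" "c i = 0" and "2*f+1 \<le> card N" and senders: "\<forall>l\<in>N. \<exists>t<k. l \<in> J i t"
  shows "tau i k \<noteq> None"
proof
  assume "tau i k = None"
  then have "N \<subseteq> M i k"
    using received_while_waiting_stored[OF i] senders by blast
  moreover have "finite (M i k)" "card (M i k) < 2*f+1"
    using nonsource_inv_holds[OF i, of k] \<open>tau i k = None\<close> unfolding nonsource_inv_def by auto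
  ultimately have "card N \<le> card (M i k)"
    by (intro card_mono)
  then show False using assms(3) \<open>card (M i k) < 2*f+1\<close> by simp
qed

lemma fresh_index_kept:
  assumes i: "i \<in> V - A" "c i = 0" and "tau i k \<noteq> None"
    and fresh: "l \<in> M i k \<and> d i k l + s \<le> k \<or> l \<in> J i k \<and> rt (rcv i k l) + s \<le> k"
  shows "l \<in> M i (Suc k) \<and> d i (Suc k) l + s \<le> Suc k \<or>
    (\<forall>l'\<in>M i (Suc k). d i (Suc k) l' + s \<le> Suc k)"
proof -
  obtain t0 where "tau i k = Some t0" using assms(3) by blast
  note step = nonsource_node_step[OF i, of k, unfolded this]
  have "s \<le> k" using fresh by auto
  moreover have "l \<in> M i k \<and> d i k l \<le> k - s \<or> l \<in> J_set (in_nbrs (E k) i) k (rcv i k) \<and> rt (rcv i k l) \<le> k - s"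
    using fresh unfolding J_def by auto
  ultimately show ?thesis
    using nonsource_step_small_index_kept[OF step] by fastforce
qed

lemma fresh_senders_retained:
  assumes i: "i \<in> V - A" "c i = 0" and indexed: "tau i w \<noteq> None" and "s \<le> w" "w \<le> k"
    and senders: "\<And>l. l \<in> N \<Longrightarrow> w \<le> jt l \<and> l \<in> J i (jt l) \<and> rt (rcv i (jt l) l) + s \<le> jt l"
  shows "informed_since i s k \<or> (\<forall>l\<in>N. jt l < k \<longrightarrow> l \<in> M i k \<and> d i k l + s \<le> k)"
  using \<open>w \<le> k\<close>
proof (induction k rule: dec_induct)
  case base
  have "\<not> jt l < w" if "l \<in> N" for l
    using senders[OF that] by simp
  then show ?case by blast
next
  case (step n)
  have "tau i n \<noteq> None" using index_ne_None_mono[OF i(1) indexed \<open>w \<le> n\<close>] .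
  from step.IH show ?case
  proof
    assume "informed_since i s n"
    then have "informed_since i s (Suc n)"
      using informed_since_mono[OF i(1), of s n "Suc n"] by simp
    then show ?case ..
  next
    assume retained: "\<forall>l\<in>N. jt l < n \<longrightarrow> l \<in> M i n \<and> d i n l + s \<le> n"
    have kept: "l \<in> M i (Suc n) \<and> d i (Suc n) l + s \<le> Suc n \<or>
        (\<forall>l'\<in>M i (Suc n). d i (Suc n) l' + s \<le> Suc n)" if "l \<in> N" "jt l < Suc n" for l
    proof (rule fresh_index_kept[OF i \<open>tau i n \<noteq> None\<close>])
      show "l \<in> M i n \<and> d i n l + s \<le> n \<or> l \<in> J i n \<and> rt (rcv i n l) + s \<le> n"
      proof (cases "jt l < n")
        case True
        then show ?thesis using retained \<open>l \<in> N\<close> by auto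
      next
        case False
        then have "jt l = n" using \<open>jt l < Suc n\<close> by simp
        then show ?thesis using senders[OF \<open>l \<in> N\<close>] by auto
      qed
    qed
    show ?case
    proof (cases "\<forall>l'\<in>M i (Suc n). d i (Suc n) l' + s \<le> Suc n")
      case True
      then show ?thesis
        using informed_if_stored_fresh[OF i index_Suc_ne_None[OF i(1) \<open>tau i n \<noteq> None\<close>]] by blast
    next
      case False
      then show ?thesis using kept by blast
    qed
  qed
qed

lemma informed_by_fresh_senders:
  assumes i: "i \<in> V - A" "c i = 0" and indexed: "tau i w \<noteq> None" and "s \<le> w"
    and "2*f+1 \<le> card N"
    and senders: "\<And>l. l \<in> N \<Longrightarrow> w \<le> jt l \<and> jt l < w' \<and> l \<in> J i (jt l) \<and> rt (rcv i (jt l) l) + s \<le> jt l"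
  shows "informed_since i s w'"
proof -
  obtain l0 where "l0 \<in> N" using \<open>2*f+1 \<le> card N\<close> by fastforce
  then have "w \<le> w'" using senders by fastforce
  have "informed_since i s w' \<or> (\<forall>l\<in>N. jt l < w' \<longrightarrow> l \<in> M i w' \<and> d i w' l + s \<le> w')"
    by (rule fresh_senders_retained[OF i indexed \<open>s \<le> w\<close> \<open>w \<le> w'\<close>]) (use senders in blast)
  then show ?thesis
  proof
    assume "\<forall>l\<in>N. jt l < w' \<longrightarrow> l \<in> M i w' \<and> d i w' l + s \<le> w'"
    then have stored: "\<forall>l\<in>N. l \<in> M i w' \<and> d i w' l + s \<le> w'"
      using senders by blast
    have "tau i w' \<noteq> None" using index_ne_None_mono[OF i(1) indexed \<open>w \<le> w'\<close>] .
    note indexed' = nonsource_indexed[OF i this]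
    have "N = M i w'"
      using card_seteq[of "M i w'" N] stored indexed' \<open>2*f+1 \<le> card N\<close> by auto
    then show ?thesis
      using informed_if_stored_fresh[OF i \<open>tau i w' \<noteq> None\<close>] stored by blast
  qed
qed

lemma index_spreads:
  assumes i: "i \<in> V - A" "c i = 0"
    and N: "N \<subseteq> in_nbrs (\<Union>t\<in>{w..<w'}. E t) i - A" "2*f+1 \<le> card N"
    and indexed: "\<forall>l\<in>N. tau l w \<noteq> None"
  shows "tau i w' \<noteq> None"
proof (rule index_assigned_by_senders[OF i N(2)])
  show "\<forall>l\<in>N. \<exists>t<w'. l \<in> J i t"
  proof
    fix l assume "l \<in> N"
    then obtain t where t: "t \<in> {w..<w'}" "l \<in> in_nbrs (E t) i" "l \<notin> A"
      using N(1) unfolding in_nbrs_UN by blast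
    then have "l \<in> V - A" using in_nbrs_subset_V by blast
    then obtain \<tau> where "tau l t = Some \<tau>"
      using index_ne_None_mono[of l w t] indexed \<open>l \<in> N\<close> t(1) by auto
    then have "l \<in> J i t"
      using J_intro[OF t(2,3)] index_le[OF \<open>l \<in> V - A\<close>] by blast
    then show "\<exists>t<w'. l \<in> J i t" using t(1) by auto
  qed
qed

lemma informed_spreads:
  assumes i: "i \<in> V - A" "c i = 0" and "tau i w \<noteq> None" "s \<le> w"
    and N: "N \<subseteq> in_nbrs (\<Union>t\<in>{w..<w'}. E t) i - A" "2*f+1 \<le> card N"
    and informed: "\<forall>l\<in>N. informed_since l s w"
  shows "informed_since i s w'"
proof -
  have "\<forall>l\<in>N. \<exists>t. w \<le> t \<and> t < w' \<and> l \<in> J i t \<and> rt (rcv i t l) + s \<le> t"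
  proof
    fix l assume "l \<in> N"
    then obtain t where t: "t \<in> {w..<w'}" "l \<in> in_nbrs (E t) i" "l \<notin> A"
      using N(1) unfolding in_nbrs_UN by blast
    then have "l \<in> V - A" using in_nbrs_subset_V by blast
    then obtain \<tau> where "tau l t = Some \<tau>" "\<tau> + s \<le> t"
      using informed_since_mono[of l s w t] informed \<open>l \<in> N\<close> t(1)
      unfolding informed_since_def by auto
    then show "\<exists>t. w \<le> t \<and> t < w' \<and> l \<in> J i t \<and> rt (rcv i t l) + s \<le> t"
      using J_intro[OF t(2,3)] t(1) by auto
  qed
  then obtain jt where "\<forall>l\<in>N. w \<le> jt l \<and> jt l < w' \<and> l \<in> J i (jt l) \<and> rt (rcv i (jt l) l) + s \<le> jt l"
    by metis
  then show ?thesis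
    using informed_by_fresh_senders[OF i \<open>tau i w \<noteq> None\<close> \<open>s \<le> w\<close> N(2)] by blast
qed

lemma index_assigned_eventually:
  assumes robust: "\<And>m. strongly_robust V (\<Union>t\<in>{m*T..<(m+1)*T}. E t) (source_set V c) (3*f+1)"
  shows "\<forall>i\<in>V - A. tau i (card V * T) \<noteq> None"
proof (rule robust_spreading[OF finite_V finite_A card_A robust, where P = "\<lambda>i m. tau i (m*T) \<noteq> None"])
  show "(\<Union>t\<in>{m*T..<(m+1)*T}. E t) \<subseteq> V \<times> V" for m
    using E_subset by blast
  show "tau i (m*T) \<noteq> None" if "i \<in> V - A" "i \<in> source_set V c" for i m
    using source_node[OF that(1)] that(2) unfolding source_set_def by simp
  show "tau i (Suc m * T) \<noteq> None" if "i \<in> V - A" "tau i (m*T) \<noteq> None" for i m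
    using index_ne_None_mono[OF that] by simp
  show "tau i (Suc m * T) \<noteq> None"
    if "i \<in> V - A - source_set V c" "N \<subseteq> in_nbrs (\<Union>t\<in>{m*T..<(m+1)*T}. E t) i - A"
      "2*f+1 \<le> card N" "\<forall>l\<in>N. tau l (m*T) \<noteq> None" for i m N
    using index_spreads[of i N "m*T" "Suc m * T"] that unfolding source_set_def by auto
qed

lemma informed_eventually:
  assumes robust: "\<And>m. strongly_robust V (\<Union>t\<in>{m*T..<(m+1)*T}. E t) (source_set V c) (3*f+1)"
    and "card V \<le> m0"
  shows "\<forall>i\<in>V - A. informed_since i (m0*T) ((m0 + card V)*T)"
proof (rule robust_spreading[OF finite_V finite_A card_A robust[of "m0 + _"],
      where P = "\<lambda>i m. informed_since i (m0*T) ((m0 + m)*T)"])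
  show "(\<Union>t\<in>{(m0+m)*T..<(m0+m+1)*T}. E t) \<subseteq> V \<times> V" for m
    using E_subset by blast
  show "informed_since i (m0*T) ((m0 + m)*T)" if "i \<in> V - A" "i \<in> source_set V c" for i m
    using source_node[OF that(1)] that(2) unfolding source_set_def informed_since_def
    by (simp add: add_mult_distrib)
  show "informed_since i (m0*T) ((m0 + Suc m)*T)"
    if "i \<in> V - A" "informed_since i (m0*T) ((m0 + m)*T)" for i m
    using informed_since_mono[OF that] by simp
  show "informed_since i (m0*T) ((m0 + Suc m)*T)"
    if i: "i \<in> V - A - source_set V c"
      and N: "N \<subseteq> in_nbrs (\<Union>t\<in>{(m0+m)*T..<(m0+m+1)*T}. E t) i - A" "2*f+1 \<le> card N"
      and informed: "\<forall>l\<in>N. informed_since l (m0*T) ((m0 + m)*T)" for i m N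
  proof -
    have i': "i \<in> V - A" "c i = 0"
      using i unfolding source_set_def by auto
    have "card V * T \<le> (m0 + m) * T"
      using \<open>card V \<le> m0\<close> by simp
    then have "tau i ((m0 + m) * T) \<noteq> None"
      using index_ne_None_mono[OF i'(1)] index_assigned_eventually[OF robust] i'(1) by blast
    then show ?thesis
      using informed_spreads[OF i' _ _ _ N(2) informed] N(1) by (simp add: add_mult_distrib)
  qed
qed

lemma index_eventually_bounded:
  assumes "0 < T"
    and robust: "\<And>m. strongly_robust V (\<Union>t\<in>{m*T..<(m+1)*T}. E t) (source_set V c) (3*f+1)"
    and k: "2 * card V * T \<le> k" and i: "i \<in> V - A"
  shows "\<exists>t. tau i k = Some t \<and> t \<le> (card V + 1) * T"
proof -
  define m0 where "m0 = k div T - card V"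
  have "2 * card V \<le> k div T"
    using div_le_mono[OF k, of T] \<open>0 < T\<close> by simp
  then have "card V \<le> m0" and q: "m0 + card V = k div T"
    unfolding m0_def by simp_all
  have "k div T * T + k mod T = k" by (rule div_mult_mod_eq)
  moreover have "k mod T < T" using \<open>0 < T\<close> by simp
  ultimately have "k div T * T \<le> k" "k < k div T * T + T" by linarith+
  then have "informed_since i (m0*T) k"
    using informed_since_mono[OF i] informed_eventually[OF robust \<open>card V \<le> m0\<close>] i q by metis
  then obtain t where "tau i k = Some t" "t + m0*T \<le> k"
    unfolding informed_since_def by blast
  moreover have "k < (m0 + card V) * T + T"
    using q \<open>k < k div T * T + T\<close> by simp
  ultimately show ?thesis
    by (intro exI[of _ t]) (simp add: algebra_simps)
qed

theorem estimate_error_exponential: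
  assumes "0 < T"
    and robust: "\<And>m. strongly_robust V (\<Union>t\<in>{m*T..<(m+1)*T}. E t) (source_set V c) (3*f+1)"
    and "0 < \<rho>" "\<rho> < 1" and gain: "\<And>i. c i \<noteq> 0 \<Longrightarrow> a - L i * c i = \<rho>"
  shows "\<exists>C::real. C \<ge> 0 \<and> (\<exists>K::nat. \<forall>k\<ge>K. \<forall>i\<in>V - A. \<bar>xh i k - x k\<bar> \<le> C * \<rho> ^ k)"
proof -
  define Q where "Q = max 1 \<bar>a\<bar> / \<rho>"
  define e where "e = (\<Sum>i\<in>V. \<bar>xh i 0 - x 0\<bar>)"
  define D where "D = (card V + 1) * T"
  have "1 \<le> Q" "\<bar>a\<bar> \<le> Q * \<rho>"
    using \<open>0 < \<rho>\<close> \<open>\<rho> < 1\<close> unfolding Q_def by (simp_all add: field_simps)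
  have "0 \<le> e"
    unfolding e_def by (simp add: sum_nonneg)
  have initial: "\<bar>xh i 0 - x 0\<bar> \<le> e" if "i \<in> V - A" for i
    unfolding e_def using finite_V that by (intro member_le_sum) auto
  note error = estimate_error_le[OF \<open>0 < \<rho>\<close> \<open>1 \<le> Q\<close> \<open>\<bar>a\<bar> \<le> Q * \<rho>\<close> \<open>0 \<le> e\<close>]
  have "\<bar>xh i k - x k\<bar> \<le> freshness_bound Q e D * \<rho> ^ k"
    if late: "2 * card V * T \<le> k" "i \<in> V - A" for k i
  proof -
    obtain t where "tau i k = Some t" "t \<le> D"
      using index_eventually_bounded[OF \<open>0 < T\<close> robust late] unfolding D_def by blast
    then have "\<bar>xh i k - x k\<bar> \<le> freshness_bound Q e t * \<rho> ^ k"
      using error initial gain \<open>i \<in> V - A\<close> by blast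
    also have "\<dots> \<le> freshness_bound Q e D * \<rho> ^ k"
      using freshness_bound_mono[OF \<open>1 \<le> Q\<close> \<open>0 \<le> e\<close> \<open>t \<le> D\<close>] \<open>0 < \<rho>\<close> by simp
    finally show ?thesis .
  qed
  moreover have "0 \<le> freshness_bound Q e D"
    using freshness_bound_nonneg[OF \<open>1 \<le> Q\<close> \<open>0 \<le> e\<close>] .
  ultimately show ?thesis by blast
qed

end

theorem theorem2:
  fixes V :: "nat set" and E :: "nat \<Rightarrow> (nat \<times> nat) set"
    and a :: real and c :: "nat \<Rightarrow> real" and f :: nat
  assumes "finite V"
    and "\<forall>k. E k \<subseteq> V \<times> V"
    and "jointly_strongly_robust V E (source_set V c) (3*f+1)"
  shows "\<forall>\<rho>::real. 0 < \<rho> \<and> \<rho> < 1 \<longrightarrow>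
    (\<exists>L :: nat \<Rightarrow> real.
      \<forall>A adv x xh tau M v d ph.
        A \<subseteq> V \<and> card A \<le> f \<and> alg2_exec V E f a c L A adv x xh tau M v d ph \<longrightarrow>
        (\<exists>C::real. C \<ge> 0 \<and> (\<exists>K::nat. \<forall>k\<ge>K. \<forall>i\<in>V - A. \<bar>xh i k - x k\<bar> \<le> C * \<rho> ^ k)))"
proof (intro allI impI)
  fix \<rho> :: real
  assume \<rho>: "0 < \<rho> \<and> \<rho> < 1"
  obtain T where "0 < T"
    and robust: "\<And>m. strongly_robust V (\<Union>t\<in>{m*T..<(m+1)*T}. E t) (source_set V c) (3*f+1)"
    using assms(3) unfolding jointly_strongly_robust_def by blast
  define L where "L i = (a - \<rho>) / c i" for i
  \<comment> \<open>junk value 0 for c i = 0, where the gain is never used\<close>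
  have gain: "a - L i * c i = \<rho>" if "c i \<noteq> 0" for i
    using that unfolding L_def by simp
  show "\<exists>L. \<forall>A adv x xh tau M v d ph.
        A \<subseteq> V \<and> card A \<le> f \<and> alg2_exec V E f a c L A adv x xh tau M v d ph \<longrightarrow>
        (\<exists>C::real. C \<ge> 0 \<and> (\<exists>K::nat. \<forall>k\<ge>K. \<forall>i\<in>V - A. \<bar>xh i k - x k\<bar> \<le> C * \<rho> ^ k))"
  proof (intro exI[of _ L] allI impI)
    fix A adv x xh tau M v d ph
    assume "A \<subseteq> V \<and> card A \<le> f \<and> alg2_exec V E f a c L A adv x xh tau M v d ph"
    then interpret alg2_execution V E f a c L A adv x xh tau M v d ph
      using assms(1,2) by unfold_locales auto
    show "\<exists>C::real. C \<ge> 0 \<and> (\<exists>K::nat. \<forall>k\<ge>K. \<forall>i\<in>V - A. \<bar>xh i k - x k\<bar> \<le> C * \<rho> ^ k)"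
      using estimate_error_exponential[OF \<open>0 < T\<close> robust _ _ gain] \<rho> by blast
  qed
qed

end
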